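(* Let $N\ge1$ be an integer, $d>0$, $T\ge (N+1)d$, and $0\le s_1\le\dots\le s_N$. Let $x^e$ be the optimal solution of the problem $(P^e)$: $$\min_{x\in\mathbb{R}^{N+1}}\ \sum_{i=1}^{N+1}x_i^2$$ subject to $\sum_{i=1}^k x_i\ge s_k+kd$ for $1\le k\le N$, and $\sum_{i=1}^{N+1}x_i=T+Nd$. Let $\bar x$ be the output of the Inter-Update Balancing Algorithm defined in the context. Then $x_i^e=\bar x_i$ for all $1\le i\le N$.
   Context: Inter-Update Balancing Algorithm. Set $s_0:=0$, $s_{N+1}:=T-d$, and $i_0:=0$. For $k=0,1,2,\dots$, while $i_k<N+1$, do the following. 1. Compute $M_k=\max_{i_k<j\le N+1}\frac{s_j-s_{i_k}}{j-i_k}$. 2. Let $i_{k+1}$ be the largest index $j\in\{i_k+1,\dots,N+1\}$ attaining this maximum. 3. Set $\bar x_i=M_k+d$ for all $i_k<i\le i_{k+1}$. The algorithm stops once $i_{k+1}=N+1$. Problem $(P^e)$ has a strictly convex objective, so its optimal solution is unique. *)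

theory Defs
  imports Complex_Main
begin

definition sx :: "nat \<Rightarrow> real \<Rightarrow> real \<Rightarrow> (nat \<Rightarrow> real) \<Rightarrow> nat \<Rightarrow> real" where
  "sx N T d s j = (if j = 0 then 0 else if j = N + 1 then T - d else s j)"

definition slope :: "nat \<Rightarrow> real \<Rightarrow> real \<Rightarrow> (nat \<Rightarrow> real) \<Rightarrow> nat \<Rightarrow> nat \<Rightarrow> real" where
  "slope N T d s i j = (sx N T d s j - sx N T d s i) / (real j - real i)"

definition ibM :: "nat \<Rightarrow> real \<Rightarrow> real \<Rightarrow> (nat \<Rightarrow> real) \<Rightarrow> nat \<Rightarrow> real" where
  "ibM N T d s i = Max ((\<lambda>j. slope N T d s i j) ` {i<..N+1})"

definition ibNext :: "nat \<Rightarrow> real \<Rightarrow> real \<Rightarrow> (nat \<Rightarrow> real) \<Rightarrow> nat \<Rightarrow> nat" where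
  "ibNext N T d s i = Max {j \<in> {i<..N+1}. slope N T d s i j = ibM N T d s i}"

fun ibIdx :: "nat \<Rightarrow> real \<Rightarrow> real \<Rightarrow> (nat \<Rightarrow> real) \<Rightarrow> nat \<Rightarrow> nat" where
  "ibIdx N T d s 0 = 0"
| "ibIdx N T d s (Suc k) =
     (if ibIdx N T d s k < N + 1 then ibNext N T d s (ibIdx N T d s k) else ibIdx N T d s k)"

text \<open>Step 3: output xbar_i = M_k + d for the step k with i_k < i <= i_{k+1}.\<close>
definition ibXbar :: "nat \<Rightarrow> real \<Rightarrow> real \<Rightarrow> (nat \<Rightarrow> real) \<Rightarrow> nat \<Rightarrow> real" where
  "ibXbar N T d s i =
     (let k = (LEAST k. i \<le> ibIdx N T d s (Suc k)) in ibM N T d s (ibIdx N T d s k) + d)"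

definition feasPe :: "nat \<Rightarrow> real \<Rightarrow> real \<Rightarrow> (nat \<Rightarrow> real) \<Rightarrow> (nat \<Rightarrow> real) \<Rightarrow> bool" where
  "feasPe N T d s x \<longleftrightarrow>
     (\<forall>k\<in>{1..N}. (\<Sum>i=1..k. x i) \<ge> s k + real k * d) \<and>
     (\<Sum>i=1..N+1. x i) = T + real N * d"

definition objPe :: "nat \<Rightarrow> (nat \<Rightarrow> real) \<Rightarrow> real" where
  "objPe N x = (\<Sum>i=1..N+1. (x i)^2)"

end

theory Submission
  imports Defs
begin

text \<open>
  The algorithm computes the upper concave envelope of the points \<open>(j, s j)\<close>, \<open>0 \<le> j \<le> N + 1\<close>,
  and its output \<open>x\<close> is chosen so that the points \<open>(j, (\<Sum>i\<le>j. x i) - j d)\<close> lie on this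
  envelope: they meet \<open>s\<close> at the breakpoints \<open>i\<^sub>k\<close> and dominate it elsewhere, so \<open>x\<close> is
  feasible; moreover \<open>x\<close> is nonincreasing and drops only at breakpoints, where the constraint is
  tight. For feasible \<open>y\<close>, summation by parts writes \<open>\<Sum>i. x i (y i - x i)\<close> as a nonnegative
  combination of the prefix slacks \<open>\<Sum>i\<le>j. y i - x i\<close> at breakpoints, whence
  \<open>|y|\<^sup>2 \<ge> |x|\<^sup>2 + |y - x|\<^sup>2\<close>, and the minimiser is \<open>x\<close>.
\<close>

lemma sum_by_parts_prefix:
  fixes a w :: "nat \<Rightarrow> 'a::comm_ring_1"
  shows "(\<Sum>i=1..n. a i * w i) =
    a n * (\<Sum>i=1..n. w i) + (\<Sum>j=1..<n. (a j - a (j + 1)) * (\<Sum>i=1..j. w i))"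
proof (induction n)
  case 0
  then show ?case by simp
next
  case (Suc n)
  show ?case
  proof (cases "n = 0")
    case False
    then have "{1..<Suc n} = insert n {1..<n}" by auto
    then show ?thesis using Suc.IH by (simp add: algebra_simps)
  qed simp
qed

lemma sum_power2_ge_of_antimono_prefix:
  fixes x y :: "nat \<Rightarrow> real"
  assumes total: "(\<Sum>i=1..n. y i) = (\<Sum>i=1..n. x i)"
    and antimono: "\<And>j. 1 \<le> j \<Longrightarrow> j < n \<Longrightarrow> x (j + 1) \<le> x j"
    and prefix: "\<And>j. 1 \<le> j \<Longrightarrow> j < n \<Longrightarrow> x (j + 1) < x j \<Longrightarrow>
                   (\<Sum>i=1..j. x i) \<le> (\<Sum>i=1..j. y i)"
  shows "(\<Sum>i=1..n. (x i)\<^sup>2) + (\<Sum>i=1..n. (y i - x i)\<^sup>2) \<le> (\<Sum>i=1..n. (y i)\<^sup>2)"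
proof -
  let ?w = "\<lambda>i. y i - x i"
  have "(\<Sum>i=1..n. ?w i) = 0"
    using total by (simp add: sum_subtractf)
  then have "(\<Sum>i=1..n. x i * ?w i) = (\<Sum>j=1..<n. (x j - x (j + 1)) * (\<Sum>i=1..j. ?w i))"
    using sum_by_parts_prefix[of x ?w n] by simp
  also have "\<dots> \<ge> 0"
  proof (rule sum_nonneg)
    fix j assume j: "j \<in> {1..<n}"
    show "(x j - x (j + 1)) * (\<Sum>i=1..j. ?w i) \<ge> 0"
    proof (cases "x (j + 1) < x j")
      case True
      then show ?thesis using prefix[of j] j by (simp add: sum_subtractf)
    next
      case False
      then show ?thesis using antimono[of j] j by simp
    qed
  qed
  finally have cross: "(\<Sum>i=1..n. x i * ?w i) \<ge> 0" .
  have "(\<Sum>i=1..n. (y i)\<^sup>2) = (\<Sum>i=1..n. (x i)\<^sup>2 + 2 * (x i * ?w i) + (?w i)\<^sup>2)"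
    by (rule sum.cong) (auto simp: power2_eq_square algebra_simps)
  also have "\<dots> = (\<Sum>i=1..n. (x i)\<^sup>2) + 2 * (\<Sum>i=1..n. x i * ?w i) + (\<Sum>i=1..n. (?w i)\<^sup>2)"
    by (simp add: sum.distrib sum_distrib_left)
  finally show ?thesis using cross by simp
qed

lemma eq_of_antimono_prefix_minimal:
  fixes x y :: "nat \<Rightarrow> real"
  assumes "(\<Sum>i=1..n. y i) = (\<Sum>i=1..n. x i)"
    and "\<And>j. 1 \<le> j \<Longrightarrow> j < n \<Longrightarrow> x (j + 1) \<le> x j"
    and "\<And>j. 1 \<le> j \<Longrightarrow> j < n \<Longrightarrow> x (j + 1) < x j \<Longrightarrow>
           (\<Sum>i=1..j. x i) \<le> (\<Sum>i=1..j. y i)"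
    and "(\<Sum>i=1..n. (y i)\<^sup>2) \<le> (\<Sum>i=1..n. (x i)\<^sup>2)"
  shows "\<forall>i\<in>{1..n}. y i = x i"
proof -
  have "(\<Sum>i=1..n. (y i - x i)\<^sup>2) \<ge> 0"
    by (intro sum_nonneg) simp
  then have "(\<Sum>i=1..n. (y i - x i)\<^sup>2) = 0"
    using sum_power2_ge_of_antimono_prefix[OF assms(1-3)] assms(4) by linarith
  then show ?thesis by (simp add: sum_nonneg_eq_0_iff)
qed

context
  fixes N :: nat and T d :: real and s :: "nat \<Rightarrow> real"
begin

private abbreviation (input) "S \<equiv> sx N T d s"
private abbreviation (input) "sl \<equiv> slope N T d s"
private abbreviation (input) "M \<equiv> ibM N T d s"
private abbreviation (input) "nxt \<equiv> ibNext N T d s"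
private abbreviation (input) "idx \<equiv> ibIdx N T d s"
private abbreviation (input) "xbar \<equiv> ibXbar N T d s"

lemma slope_mult_eq:
  assumes "i < j"
  shows "(real j - real i) * sl i j = S j - S i"
  using assms unfolding slope_def by (simp add: field_simps)

lemma ibM_attained:
  assumes "i < N + 1"
  shows "M i \<in> sl i ` {i<..N+1}"
  unfolding ibM_def using assms by (intro Max_in) auto

lemma slope_le_ibM:
  assumes "i < N + 1" "j \<in> {i<..N+1}"
  shows "sl i j \<le> M i"
  unfolding ibM_def using assms by (intro Max_ge) auto

lemma ibNext_mem:
  assumes "i < N + 1"
  shows "nxt i \<in> {i<..N+1}" and "sl i (nxt i) = M i"
proof -
  have "{j \<in> {i<..N+1}. sl i j = M i} \<noteq> {}"
    using ibM_attained[OF assms] by auto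
  then have "nxt i \<in> {j \<in> {i<..N+1}. sl i j = M i}"
    unfolding ibNext_def by (intro Max_in) auto
  then show "nxt i \<in> {i<..N+1}" and "sl i (nxt i) = M i" by auto
qed

lemma slope_less_ibM_beyond_ibNext:
  assumes "i < N + 1" "nxt i < j" "j \<le> N + 1"
  shows "sl i j < M i"
proof -
  have j: "j \<in> {i<..N+1}" using ibNext_mem(1)[OF assms(1)] assms by auto
  have "sl i j \<noteq> M i"
  proof
    assume "sl i j = M i"
    then have "j \<le> nxt i" unfolding ibNext_def using j by (intro Max_ge) auto
    then show False using assms by simp
  qed
  then show ?thesis using slope_le_ibM[OF assms(1) j] by simp
qed

lemma ibIdx_Suc_active: "idx k < N + 1 \<Longrightarrow> idx (Suc k) = nxt (idx k)"
  by simp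

lemma ibIdx_Suc_stop: "\<not> idx k < N + 1 \<Longrightarrow> idx (Suc k) = idx k"
  by simp

declare ibIdx.simps(2)[simp del]

lemma ibIdx_le: "idx k \<le> N + 1"
proof (induction k)
  case (Suc k)
  then show ?case
    using ibNext_mem(1)[of "idx k"] ibIdx_Suc_active[of k] ibIdx_Suc_stop[of k]
    by (cases "idx k < N + 1") auto
qed simp

lemma ibIdx_less_Suc: "idx k < N + 1 \<Longrightarrow> idx k < idx (Suc k)"
  using ibNext_mem(1) ibIdx_Suc_active by simp

lemma ibIdx_mono: "k \<le> k' \<Longrightarrow> idx k \<le> idx k'"
proof (induction k' rule: dec_induct)
  case (step k')
  then show ?case
    using ibIdx_less_Suc[of k'] ibIdx_Suc_stop[of k'] by (cases "idx k' < N + 1") auto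
qed simp

lemma ibIdx_ge_min: "min k (N + 1) \<le> idx k"
proof (induction k)
  case (Suc k)
  then show ?case
    using ibIdx_less_Suc[of k] ibIdx_le[of k] ibIdx_Suc_stop[of k]
    by (cases "idx k < N + 1") auto
qed simp

lemma ibIdx_end: "idx (N + 1) = N + 1"
  using ibIdx_ge_min[of "N + 1"] ibIdx_le[of "N + 1"] by simp

lemma ibXbar_on_segment:
  assumes "idx k < j" "j \<le> idx (Suc k)"
  shows "xbar j = M (idx k) + d"
proof -
  have "(LEAST k'. j \<le> idx (Suc k')) = k"
  proof (rule Least_equality)
    fix k' assume j: "j \<le> idx (Suc k')"
    show "k \<le> k'"
    proof (rule ccontr)
      assume "\<not> k \<le> k'"
      then have "idx (Suc k') \<le> idx k" by (intro ibIdx_mono) simp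
      then show False using j assms by simp
    qed
  qed fact
  then show ?thesis unfolding ibXbar_def Let_def by simp
qed

lemma ibIdx_segment_exists:
  assumes "1 \<le> j" "j \<le> N + 1"
  obtains k where "idx k < j" "j \<le> idx (Suc k)"
proof -
  define k where "k = (LEAST k. j \<le> idx (Suc k))"
  have "j \<le> idx (Suc N)"
    using ibIdx_end assms by simp
  then have "j \<le> idx (Suc k)"
    unfolding k_def by (rule LeastI)
  moreover have "idx k < j"
  proof (cases k)
    case (Suc k')
    then have "\<not> j \<le> idx (Suc k')"
      using not_less_Least[of k' "\<lambda>k. j \<le> idx (Suc k)"] unfolding k_def by simp
    then show ?thesis using Suc by simp
  qed (use assms in simp)
  ultimately show ?thesis using that by blast
qed

lemma sum_ibXbar_on_segment:
  assumes "idx k \<le> j" "j \<le> idx (Suc k)"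
  shows "(\<Sum>i=1..j. xbar i) = (\<Sum>i=1..idx k. xbar i) + (real j - real (idx k)) * (M (idx k) + d)"
  using assms
proof (induction j rule: dec_induct)
  case (step j)
  then have "xbar (Suc j) = M (idx k) + d"
    by (intro ibXbar_on_segment) auto
  then show ?case using step by (simp add: algebra_simps)
qed simp

lemma sum_ibXbar_at_ibIdx: "(\<Sum>i=1..idx k. xbar i) - real (idx k) * d = S (idx k)"
proof (induction k)
  case 0
  then show ?case by (simp add: sx_def)
next
  case (Suc k)
  show ?case
  proof (cases "idx k < N + 1")
    case True
    have less: "idx k < idx (Suc k)" using ibIdx_less_Suc[OF True] .
    have "sl (idx k) (idx (Suc k)) = M (idx k)"
      using ibNext_mem(2)[OF True] ibIdx_Suc_active[OF True] by simp
    then have "(real (idx (Suc k)) - real (idx k)) * M (idx k) = S (idx (Suc k)) - S (idx k)"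
      using slope_mult_eq[OF less] by simp
    then show ?thesis
      using Suc.IH sum_ibXbar_on_segment[of k "idx (Suc k)"] less by (simp add: algebra_simps)
  next
    case False
    then show ?thesis using Suc.IH ibIdx_Suc_stop[of k] by simp
  qed
qed

lemma sum_ibXbar_ge:
  assumes "1 \<le> j" "j \<le> N + 1"
  shows "S j \<le> (\<Sum>i=1..j. xbar i) - real j * d"
proof -
  obtain k where k: "idx k < j" "j \<le> idx (Suc k)"
    using ibIdx_segment_exists[OF assms] .
  have "sl (idx k) j \<le> M (idx k)"
    using slope_le_ibM[of "idx k" j] k assms by simp
  then have "(real j - real (idx k)) * sl (idx k) j \<le> (real j - real (idx k)) * M (idx k)"
    using k(1) by (intro mult_left_mono) simp_all
  then have "S j - S (idx k) \<le> (real j - real (idx k)) * M (idx k)"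
    using slope_mult_eq[OF k(1)] by simp
  then show ?thesis
    using sum_ibXbar_at_ibIdx[of k] sum_ibXbar_on_segment[of k j] k by (simp add: algebra_simps)
qed

lemma feasPe_ibXbar: "feasPe N T d s xbar"
  unfolding feasPe_def
proof
  show "\<forall>k\<in>{1..N}. s k + real k * d \<le> (\<Sum>i=1..k. xbar i)"
  proof
    fix k assume "k \<in> {1..N}"
    then show "s k + real k * d \<le> (\<Sum>i=1..k. xbar i)"
      using sum_ibXbar_ge[of k] by (simp add: sx_def)
  qed
  show "(\<Sum>i=1..N + 1. xbar i) = T + real N * d"
    using sum_ibXbar_at_ibIdx[of "N + 1"] ibIdx_end by (simp add: sx_def algebra_simps)
qed

lemma ibM_antimono_at_ibIdx:
  assumes "idx (Suc k) < N + 1"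
  shows "M (idx (Suc k)) \<le> M (idx k)"
proof -
  let ?a = "idx k" and ?b = "idx (Suc k)" and ?c = "idx (Suc (Suc k))"
  have a: "?a < N + 1" using assms ibIdx_Suc_stop[of k] by fastforce
  have ab: "?a < ?b" and bc: "?b < ?c"
    using ibIdx_less_Suc a assms by auto
  have "sl ?a ?c < M ?a"
    using slope_less_ibM_beyond_ibNext[OF a] ibIdx_Suc_active[OF a] bc ibIdx_le by simp
  then have "(real ?c - real ?a) * sl ?a ?c < (real ?c - real ?a) * M ?a"
    using ab bc by (intro mult_strict_left_mono) simp_all
  then have "S ?c - S ?a < (real ?c - real ?a) * M ?a"
    using slope_mult_eq[of ?a ?c] ab bc by simp
  moreover have "S ?b - S ?a = (real ?b - real ?a) * M ?a"
    using slope_mult_eq[OF ab] ibNext_mem(2)[OF a] ibIdx_Suc_active[OF a] by simp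
  moreover have "S ?c - S ?b = (real ?c - real ?b) * M ?b"
    using slope_mult_eq[OF bc] ibNext_mem(2)[OF assms] ibIdx_Suc_active[OF assms] by simp
  ultimately have "(real ?c - real ?b) * M ?b < (real ?c - real ?b) * M ?a"
    by (simp add: algebra_simps)
  then show ?thesis using bc by (simp add: mult_less_cancel_left)
qed

lemma ibXbar_Suc_cases:
  assumes "1 \<le> j" "j \<le> N"
  obtains "xbar (j + 1) = xbar j"
  | k where "j = idx (Suc k)" "xbar (j + 1) \<le> xbar j"
proof -
  obtain k where k: "idx k < j" "j \<le> idx (Suc k)"
    using ibIdx_segment_exists[of j] assms by auto
  show ?thesis
  proof (cases "j < idx (Suc k)")
    case True
    then show ?thesis
      using ibXbar_on_segment[OF k] ibXbar_on_segment[of k "j + 1"] k that(1) by simp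
  next
    case False
    then have j: "j = idx (Suc k)" using k by simp
    then have "idx (Suc k) < N + 1" using assms by simp
    then have "xbar (j + 1) = M (idx (Suc k)) + d"
      using ibXbar_on_segment[of "Suc k" "j + 1"] ibIdx_less_Suc[of "Suc k"] j by simp
    then have "xbar (j + 1) \<le> xbar j"
      using ibXbar_on_segment[OF k] ibM_antimono_at_ibIdx \<open>idx (Suc k) < N + 1\<close> by simp
    then show ?thesis using that(2) j by blast
  qed
qed

lemma ibXbar_Suc_le:
  assumes "1 \<le> j" "j \<le> N"
  shows "xbar (j + 1) \<le> xbar j"
  using assms by (cases rule: ibXbar_Suc_cases) auto

lemma sum_ibXbar_tight_at_drop:
  assumes "1 \<le> j" "j \<le> N" "xbar (j + 1) < xbar j"
  shows "(\<Sum>i=1..j. xbar i) = s j + real j * d"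
  using assms(1,2)
proof (cases rule: ibXbar_Suc_cases)
  case (2 k)
  then show ?thesis
    using sum_ibXbar_at_ibIdx[of "Suc k"] assms by (simp add: sx_def)
qed (use assms(3) in simp)

end

theorem lemma5:
  fixes N :: nat and d T :: real and s xe :: "nat \<Rightarrow> real"
  assumes "N \<ge> 1" and "d > 0" and "T \<ge> real (N + 1) * d"
    and "0 \<le> s 1" and "\<And>k. 1 \<le> k \<Longrightarrow> k < N \<Longrightarrow> s k \<le> s (k + 1)"
    and "feasPe N T d s xe"
    and "\<And>y. feasPe N T d s y \<Longrightarrow> objPe N xe \<le> objPe N y"
  shows "\<forall>i\<in>{1..N}. xe i = ibXbar N T d s i"
proof -
  let ?x = "ibXbar N T d s"
  have x_feas: "feasPe N T d s ?x"
    by (rule feasPe_ibXbar)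
  have "\<forall>i\<in>{1..N + 1}. xe i = ?x i"
  proof (rule eq_of_antimono_prefix_minimal)
    show "(\<Sum>i=1..N + 1. xe i) = (\<Sum>i=1..N + 1. ?x i)"
      using x_feas assms(6) unfolding feasPe_def by simp
    show "?x (j + 1) \<le> ?x j" if "1 \<le> j" "j < N + 1" for j
      using ibXbar_Suc_le that by simp
    show "(\<Sum>i=1..j. ?x i) \<le> (\<Sum>i=1..j. xe i)" if "1 \<le> j" "j < N + 1" "?x (j + 1) < ?x j" for j
      using sum_ibXbar_tight_at_drop[of j] assms(6) that unfolding feasPe_def by auto
    show "(\<Sum>i=1..N + 1. (xe i)\<^sup>2) \<le> (\<Sum>i=1..N + 1. (?x i)\<^sup>2)"
      using assms(7)[OF x_feas] unfolding objPe_def by simp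
  qed
  then show ?thesis by simp
qed

end
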